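(* Let $\phi:(\Gamma,w)\to(\Gamma',w')$ be a pseudo-harmonic morphism of vertex-weighted metric graphs with respect to loopless models $(G,\ell)$ and $(G',\ell')$. Then $\deg(\phi^*(K_{(\Gamma',w')}))=\deg(\phi)\deg(K_{(\Gamma',w')})$.
   Context: A vertex-weighted metric graph $(\Gamma,w)$ with loopless model $(G,\ell)$: $G$ a finite connected loopless multigraph, $\ell:E(G)\to\mathbb{R}_{>0}$, $w:V(G)\to\mathbb{Z}_{\ge0}$; $val(v)$ is the number of edges at $v$. Canonical divisor: $K_{(\Gamma,w)}=\sum_{v\in V(G)}(val(v)-2+2w(v))(v)$. A morphism of loopless models maps vertices to vertices and each edge $e=xy$ either to a vertex $\phi(x)=\phi(e)=\phi(y)$ ($U_\phi(e)=0$) or to an edge between $\phi(x),\phi(y)$ with $U_\phi(e)=\ell'(\phi(e))/\ell(e)\in\mathbb{Z}_{>0}$. Pseudo-harmonic: $M_\phi(v)=\sum_{e\ni v,\phi(e)=e'}U_\phi(e)$ is the same for all $e'\in E(G')$ incident to $\phi(v)$. $\deg\phi=\sum_{\phi(e)=e'}U_\phi(e)$ for any $e'\in E(G')$. Pullback: $\phi^*D'=\sum_{v\in V(G)}M_\phi(v)D'(\phi(v))(v)$. *)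

theory Defs
  imports Main "HOL.Real"
begin

definition adjacent :: "'e set \<Rightarrow> ('e \<Rightarrow> 'v set) \<Rightarrow> 'v \<Rightarrow> 'v \<Rightarrow> bool" where
  "adjacent E ends x y \<longleftrightarrow> (\<exists>e\<in>E. ends e = {x, y})"

definition loopless_model :: "'v set \<Rightarrow> 'e set \<Rightarrow> ('e \<Rightarrow> 'v set) \<Rightarrow> ('e \<Rightarrow> real) \<Rightarrow> bool" where
  "loopless_model V E ends len \<longleftrightarrow>
     finite V \<and> finite E \<and> V \<noteq> {} \<and>
     (\<forall>e\<in>E. ends e \<subseteq> V \<and> card (ends e) = 2 \<and> len e > 0) \<and>
     (\<forall>x\<in>V. \<forall>y\<in>V. (adjacent E ends)\<^sup>*\<^sup>* x y)"

definition val :: "'e set \<Rightarrow> ('e \<Rightarrow> 'v set) \<Rightarrow> 'v \<Rightarrow> nat" where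
  "val E ends v = card {e\<in>E. v \<in> ends e}"

text \<open>Divisors on the model: integer functions on vertices (zero off V).\<close>
definition div_deg :: "'v set \<Rightarrow> ('v \<Rightarrow> int) \<Rightarrow> int" where
  "div_deg V D = (\<Sum>v\<in>V. D v)"

definition canonical_divisor :: "'v set \<Rightarrow> 'e set \<Rightarrow> ('e \<Rightarrow> 'v set) \<Rightarrow> ('v \<Rightarrow> nat) \<Rightarrow> 'v \<Rightarrow> int" where
  "canonical_divisor V E ends w v =
     (if v \<in> V then int (val E ends v) - 2 + 2 * int (w v) else 0)"

text \<open>Morphism of loopless models: vertex map fV, edge map fE sending each edge either to
  a vertex (Inl) or to an edge (Inr) of G'.\<close>
definition is_morphism ::
  "'v set \<Rightarrow> 'e set \<Rightarrow> ('e \<Rightarrow> 'v set) \<Rightarrow> ('e \<Rightarrow> real) \<Rightarrow>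
   'w set \<Rightarrow> 'f set \<Rightarrow> ('f \<Rightarrow> 'w set) \<Rightarrow> ('f \<Rightarrow> real) \<Rightarrow>
   ('v \<Rightarrow> 'w) \<Rightarrow> ('e \<Rightarrow> 'w + 'f) \<Rightarrow> bool" where
  "is_morphism V E ends len V' E' ends' len' fV fE \<longleftrightarrow>
     (\<forall>v\<in>V. fV v \<in> V') \<and>
     (\<forall>e\<in>E. case fE e of
        Inl v' \<Rightarrow> (\<forall>x\<in>ends e. fV x = v')
      | Inr e' \<Rightarrow> e' \<in> E' \<and> fV ` ends e = ends' e' \<and>
                  (\<exists>k::nat. k > 0 \<and> len' e' / len e = real k))"

definition dilation :: "('e \<Rightarrow> real) \<Rightarrow> ('f \<Rightarrow> real) \<Rightarrow> ('e \<Rightarrow> 'w + 'f) \<Rightarrow> 'e \<Rightarrow> nat" where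
  "dilation len len' fE e =
     (case fE e of Inl _ \<Rightarrow> 0 | Inr e' \<Rightarrow> nat \<lfloor>len' e' / len e\<rfloor>)"

definition mult_at ::
  "'e set \<Rightarrow> ('e \<Rightarrow> 'v set) \<Rightarrow> ('e \<Rightarrow> real) \<Rightarrow> ('f \<Rightarrow> real) \<Rightarrow> ('e \<Rightarrow> 'w + 'f) \<Rightarrow> 'v \<Rightarrow> 'f \<Rightarrow> nat" where
  "mult_at E ends len len' fE v e' =
     (\<Sum>e\<in>{e\<in>E. v \<in> ends e \<and> fE e = Inr e'}. dilation len len' fE e)"

definition pseudo_harmonic ::
  "'v set \<Rightarrow> 'e set \<Rightarrow> ('e \<Rightarrow> 'v set) \<Rightarrow> ('e \<Rightarrow> real) \<Rightarrow>
   'w set \<Rightarrow> 'f set \<Rightarrow> ('f \<Rightarrow> 'w set) \<Rightarrow> ('f \<Rightarrow> real) \<Rightarrow>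
   ('v \<Rightarrow> 'w) \<Rightarrow> ('e \<Rightarrow> 'w + 'f) \<Rightarrow> bool" where
  "pseudo_harmonic V E ends len V' E' ends' len' fV fE \<longleftrightarrow>
     is_morphism V E ends len V' E' ends' len' fV fE \<and>
     (\<forall>v\<in>V. \<forall>e1\<in>E'. \<forall>e2\<in>E'. fV v \<in> ends' e1 \<longrightarrow> fV v \<in> ends' e2 \<longrightarrow>
        mult_at E ends len len' fE v e1 = mult_at E ends len len' fE v e2)"

text \<open>M_phi(v): the common value, computed at some edge of G' incident to phi(v).\<close>
definition local_mult ::
  "'e set \<Rightarrow> ('e \<Rightarrow> 'v set) \<Rightarrow> ('e \<Rightarrow> real) \<Rightarrow> 'f set \<Rightarrow> ('f \<Rightarrow> 'w set) \<Rightarrow> ('f \<Rightarrow> real) \<Rightarrow>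
   ('v \<Rightarrow> 'w) \<Rightarrow> ('e \<Rightarrow> 'w + 'f) \<Rightarrow> 'v \<Rightarrow> nat" where
  "local_mult E ends len E' ends' len' fV fE v =
     mult_at E ends len len' fE v (SOME e'. e' \<in> E' \<and> fV v \<in> ends' e')"

definition morph_deg ::
  "'e set \<Rightarrow> ('e \<Rightarrow> real) \<Rightarrow> 'f set \<Rightarrow> ('f \<Rightarrow> real) \<Rightarrow> ('e \<Rightarrow> 'w + 'f) \<Rightarrow> nat" where
  "morph_deg E len E' len' fE =
     (let e0 = (SOME e'. e' \<in> E') in
      \<Sum>e\<in>{e\<in>E. fE e = Inr e0}. dilation len len' fE e)"

definition pullback ::
  "'v set \<Rightarrow> 'e set \<Rightarrow> ('e \<Rightarrow> 'v set) \<Rightarrow> ('e \<Rightarrow> real) \<Rightarrow> 'f set \<Rightarrow> ('f \<Rightarrow> 'w set) \<Rightarrow> ('f \<Rightarrow> real) \<Rightarrow>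
   ('v \<Rightarrow> 'w) \<Rightarrow> ('e \<Rightarrow> 'w + 'f) \<Rightarrow> ('w \<Rightarrow> int) \<Rightarrow> 'v \<Rightarrow> int" where
  "pullback V E ends len E' ends' len' fV fE D' v =
     (if v \<in> V then int (local_mult E ends len E' ends' len' fV fE v) * D' (fV v) else 0)"

end

theory Submission
  imports Defs
begin

text \<open>Sum the local multiplicities M(v) over the fibre of a vertex v' of G'. Computing
  M(v) at an edge e' of G' at v', each edge e of G over e' is counted exactly once, since e
  maps its two endpoints bijectively onto those of e'; so the fibre sum is the
  e'-part of the degree. By pseudo-harmonicity the same holds for every edge at v', hence
  the fibre sum is constant along edges of G' and, G' being connected, equals deg phi
  everywhere. Grouping the degree of a pullback by fibres then gives
  deg (phi^* D') = deg phi \<cdot> deg D' for every divisor D', in particular for the canonical one.\<close>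

lemma card_fibre_eq_1_if_card_image_eq:
  assumes "finite A" and "card B = card A" and "f ` A = B" and "b \<in> B"
  shows "card {x\<in>A. f x = b} = 1"
proof -
  have "inj_on f A" using assms by (intro eq_card_imp_inj_on) auto
  moreover obtain a where "a \<in> A" "f a = b" using assms by blast
  ultimately have "{x\<in>A. f x = b} = {a}" by (auto simp: inj_on_def)
  then show ?thesis by simp
qed

lemma is_morphism_InrD:
  assumes "is_morphism V E ends len V' E' ends' len' fV fE" and "e \<in> E" and "fE e = Inr e'"
  shows "e' \<in> E'" and "fV ` ends e = ends' e'"
proof -
  have "case fE e of Inl v' \<Rightarrow> (\<forall>x\<in>ends e. fV x = v')
      | Inr e' \<Rightarrow> e' \<in> E' \<and> fV ` ends e = ends' e' \<and> (\<exists>k::nat. k > 0 \<and> len' e' / len e = real k)"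
    using assms(1,2) unfolding is_morphism_def by blast
  then show "e' \<in> E'" and "fV ` ends e = ends' e'" using assms(3) by simp_all
qed

lemma sum_mult_at_fibre:
  assumes G: "loopless_model V E ends len" and G': "loopless_model V' E' ends' len'"
    and phi: "is_morphism V E ends len V' E' ends' len' fV fE"
    and "e' \<in> E'" and "v' \<in> ends' e'"
  shows "(\<Sum>v\<in>{v\<in>V. fV v = v'}. mult_at E ends len len' fE v e')
       = (\<Sum>e\<in>{e\<in>E. fE e = Inr e'}. dilation len len' fE e)"
proof -
  let ?U = "dilation len len' fE"
  have finV: "finite V" and finE: "finite E" using G by (auto simp: loopless_model_def)
  have fibre: "(\<Sum>v\<in>{v\<in>{v\<in>V. fV v = v'}. v \<in> ends e \<and> fE e = Inr e'}. ?U e)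
      = (if fE e = Inr e' then ?U e else 0)" if "e \<in> E" for e
  proof (cases "fE e = Inr e'")
    case True
    have "ends e \<subseteq> V" and "card (ends e) = 2" and "card (ends' e') = 2"
      using G G' \<open>e \<in> E\<close> \<open>e' \<in> E'\<close> by (auto simp: loopless_model_def)
    moreover have "fV ` ends e = ends' e'" using is_morphism_InrD(2)[OF phi \<open>e \<in> E\<close> True] .
    ultimately have "card {x\<in>ends e. fV x = v'} = 1"
      using \<open>v' \<in> ends' e'\<close> by (intro card_fibre_eq_1_if_card_image_eq) (auto intro: card_ge_0_finite)
    moreover have "{v\<in>{v\<in>V. fV v = v'}. v \<in> ends e \<and> fE e = Inr e'} = {x\<in>ends e. fV x = v'}"
      using True \<open>ends e \<subseteq> V\<close> by auto
    ultimately show ?thesis using True by simp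
  qed simp
  have "(\<Sum>v\<in>{v\<in>V. fV v = v'}. mult_at E ends len len' fE v e')
      = (\<Sum>e\<in>E. \<Sum>v\<in>{v\<in>{v\<in>V. fV v = v'}. v \<in> ends e \<and> fE e = Inr e'}. ?U e)"
    unfolding mult_at_def using finV finE by (intro sum.swap_restrict) auto
  also have "\<dots> = (\<Sum>e\<in>E. if fE e = Inr e' then ?U e else 0)"
    using fibre by (rule sum.cong[OF refl])
  also have "\<dots> = (\<Sum>e\<in>{e\<in>E. fE e = Inr e'}. ?U e)"
    using finE by (simp add: sum.inter_filter)
  finally show ?thesis .
qed

lemma local_mult_eq_mult_at:
  assumes "pseudo_harmonic V E ends len V' E' ends' len' fV fE"
    and "v \<in> V" and "e' \<in> E'" and "fV v \<in> ends' e'"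
  shows "local_mult E ends len E' ends' len' fV fE v = mult_at E ends len len' fE v e'"
proof -
  have "\<exists>e'. e' \<in> E' \<and> fV v \<in> ends' e'" using assms by blast
  from someI_ex[OF this] show ?thesis
    using assms unfolding local_mult_def pseudo_harmonic_def by blast
qed

lemma eq_if_rtranclp_adjacent:
  assumes "(adjacent E ends)\<^sup>*\<^sup>* x y"
    and "\<And>e a b. e \<in> E \<Longrightarrow> a \<in> ends e \<Longrightarrow> b \<in> ends e \<Longrightarrow> S a = S b"
  shows "S x = S y"
  using assms(1)
proof (induction rule: rtranclp_induct)
  case (step y z)
  then obtain e where "e \<in> E" "ends e = {y, z}" by (auto simp: adjacent_def)
  then show ?case using step.IH assms(2) by auto
qed simp

lemma sum_local_mult_fibre_eq_morph_deg:
  assumes G: "loopless_model V E ends len" and G': "loopless_model V' E' ends' len'"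
    and phi: "pseudo_harmonic V E ends len V' E' ends' len' fV fE"
    and "v' \<in> V'"
  shows "(\<Sum>v\<in>{v\<in>V. fV v = v'}. local_mult E ends len E' ends' len' fV fE v)
       = morph_deg E len E' len' fE"
proof -
  let ?S = "\<lambda>v'. \<Sum>v\<in>{v\<in>V. fV v = v'}. local_mult E ends len E' ends' len' fV fE v"
  let ?D = "\<lambda>e'. \<Sum>e\<in>{e\<in>E. fE e = Inr e'}. dilation len len' fE e"
  have morph: "is_morphism V E ends len V' E' ends' len' fV fE"
    using phi by (simp add: pseudo_harmonic_def)
  have S_eq_D: "?S v' = ?D e'" if "e' \<in> E'" "v' \<in> ends' e'" for v' e'
  proof -
    have "?S v' = (\<Sum>v\<in>{v\<in>V. fV v = v'}. mult_at E ends len len' fE v e')"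
      using local_mult_eq_mult_at[OF phi] that by (intro sum.cong) auto
    also have "\<dots> = ?D e'" by (rule sum_mult_at_fibre[OF G G' morph that])
    finally show ?thesis .
  qed
  show ?thesis
  proof (cases "E' = {}")
    case True
    \<comment> \<open>the edges chosen by SOME are junk here, but no edge of G lies over any edge\<close>
    then have no_edge_over: "{e\<in>E. fE e = Inr e'} = {}" "{e\<in>E. P e \<and> fE e = Inr e'} = {}"
      for P e' using is_morphism_InrD(1)[OF morph] by blast+
    then show ?thesis
      unfolding local_mult_def mult_at_def morph_deg_def Let_def
      by (simp add: no_edge_over)
  next
    case False
    define e0 where "e0 = (SOME e'. e' \<in> E')"
    have "e0 \<in> E'" using False unfolding e0_def by (simp add: some_in_eq)
    then have "ends' e0 \<noteq> {}" and "ends' e0 \<subseteq> V'"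
      using G' by (auto simp: loopless_model_def)
    then obtain a where a: "a \<in> ends' e0" "a \<in> V'" by blast
    have "(adjacent E' ends')\<^sup>*\<^sup>* v' a"
      using G' a(2) \<open>v' \<in> V'\<close> by (simp add: loopless_model_def)
    then have "?S v' = ?S a"
      by (rule eq_if_rtranclp_adjacent) (simp add: S_eq_D)
    also have "\<dots> = ?D e0" using S_eq_D[OF \<open>e0 \<in> E'\<close> a(1)] .
    finally show ?thesis unfolding morph_deg_def e0_def Let_def .
  qed
qed

lemma div_deg_pullback:
  assumes G: "loopless_model V E ends len" and G': "loopless_model V' E' ends' len'"
    and phi: "pseudo_harmonic V E ends len V' E' ends' len' fV fE"
  shows "div_deg V (pullback V E ends len E' ends' len' fV fE D')
       = int (morph_deg E len E' len' fE) * div_deg V' D'"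
proof -
  let ?M = "local_mult E ends len E' ends' len' fV fE"
  have "finite V" "finite V'" using G G' by (auto simp: loopless_model_def)
  moreover have "fV ` V \<subseteq> V'"
    using phi unfolding pseudo_harmonic_def is_morphism_def by blast
  ultimately have "div_deg V (pullback V E ends len E' ends' len' fV fE D')
      = (\<Sum>v'\<in>V'. \<Sum>v\<in>{v\<in>V. fV v = v'}. int (?M v) * D' (fV v))"
    unfolding div_deg_def pullback_def by (simp add: sum.group[symmetric])
  also have "\<dots> = (\<Sum>v'\<in>V'. int (\<Sum>v\<in>{v\<in>V. fV v = v'}. ?M v) * D' v')"
    by (auto simp: sum_distrib_right intro!: sum.cong)
  also have "\<dots> = (\<Sum>v'\<in>V'. int (morph_deg E len E' len' fE) * D' v')"
    using sum_local_mult_fibre_eq_morph_deg[OF G G' phi] by simp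
  finally show ?thesis unfolding div_deg_def by (simp add: sum_distrib_left)
qed

theorem lemma6p9:
  fixes V :: "'v set" and E :: "'e set" and ends :: "'e \<Rightarrow> 'v set" and len :: "'e \<Rightarrow> real"
    and w :: "'v \<Rightarrow> nat"
    and V' :: "'w set" and E' :: "'f set" and ends' :: "'f \<Rightarrow> 'w set" and len' :: "'f \<Rightarrow> real"
    and w' :: "'w \<Rightarrow> nat"
    and fV :: "'v \<Rightarrow> 'w" and fE :: "'e \<Rightarrow> 'w + 'f"
  assumes "loopless_model V E ends len"
    and "loopless_model V' E' ends' len'"
    and "pseudo_harmonic V E ends len V' E' ends' len' fV fE"
  shows "div_deg V (pullback V E ends len E' ends' len' fV fE (canonical_divisor V' E' ends' w'))
         = int (morph_deg E len E' len' fE) * div_deg V' (canonical_divisor V' E' ends' w')"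
  using assms by (rule div_deg_pullback)

end
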